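(* For every classical formula $\phi$ of $\mathsf{PT}$, reading $\phi$ as a formula of classical propositional logic with tensor $\otimes$ read as classical disjunction (and $\to$, $\neg$, $\wedge$ read classically), $\phi$ is a classical tautology if and only if $\models\phi$ in team semantics.
   Context: A valuation is a function $v$ from the set Prop of propositional variables to $\{0,1\}$; a team is a set of valuations. Formulas of $\mathsf{PT}$: $\phi::=p\mid\neg p\mid\bot\mid\top\mid\,=\!(p_1,\dots,p_k,q)\mid\phi\wedge\phi\mid\phi\otimes\phi\mid\phi\vee\phi\mid\phi\to\phi$. Satisfaction on a team $X$: $X\models p$ iff $v(p)=1$ for all $v\in X$; $X\models\neg p$ iff $v(p)=0$ for all $v\in X$; $X\models\bot$ iff $X=\emptyset$; $X\models\top$ always; $X\models\,=\!(\vec p,q)$ iff for all $v,v'\in X$, $v(\vec p)=v'(\vec p)$ implies $v(q)=v'(q)$; $\wedge$ conjunction; $X\models\phi\otimes\psi$ iff $X=Y\cup Z$ with $Y\models\phi$, $Z\models\psi$; $X\models\phi\vee\psi$ iff $X\models\phi$ or $X\models\psi$; $X\models\phi\to\psi$ iff every $Y\subseteq X$ with $Y\models\phi$ satisfies $\psi$. $\models\phi$ means all teams satisfy $\phi$. A formula of $\mathsf{PT}$ is classical if it contains no dependence atoms and no intuitionistic disjunction $\vee$. *)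

theory Defs
  imports Main
begin

datatype 'p fml =
    Var 'p
  | NegVar 'p
  | Bot
  | Top
  | Dep "'p list" 'p
  | Conj "'p fml" "'p fml"
  | Tensor "'p fml" "'p fml"
  | IDisj "'p fml" "'p fml"
  | Imp "'p fml" "'p fml"

type_synonym 'p valuation = "'p \<Rightarrow> bool"
type_synonym 'p team = "'p valuation set"

fun tsat :: "'p team \<Rightarrow> 'p fml \<Rightarrow> bool" where
  "tsat X (Var p) = (\<forall>v\<in>X. v p)"
| "tsat X (NegVar p) = (\<forall>v\<in>X. \<not> v p)"
| "tsat X Bot = (X = {})"
| "tsat X Top = True"
| "tsat X (Dep ps q) = (\<forall>v\<in>X. \<forall>v'\<in>X. map v ps = map v' ps \<longrightarrow> v q = v' q)"
| "tsat X (Conj a b) = (tsat X a \<and> tsat X b)"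
| "tsat X (Tensor a b) = (\<exists>Y Z. X = Y \<union> Z \<and> tsat Y a \<and> tsat Z b)"
| "tsat X (IDisj a b) = (tsat X a \<or> tsat X b)"
| "tsat X (Imp a b) = (\<forall>Y. Y \<subseteq> X \<longrightarrow> tsat Y a \<longrightarrow> tsat Y b)"

definition valid :: "'p fml \<Rightarrow> bool" where
  "valid \<phi> \<longleftrightarrow> (\<forall>X. tsat X \<phi>)"

fun classical :: "'p fml \<Rightarrow> bool" where
  "classical (Dep _ _) = False"
| "classical (IDisj _ _) = False"
| "classical (Conj a b) = (classical a \<and> classical b)"
| "classical (Tensor a b) = (classical a \<and> classical b)"
| "classical (Imp a b) = (classical a \<and> classical b)"
| "classical _ = True"

text \<open>Classical (single valuation) reading; tensor read as classical disjunction.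
  The clauses for Dep and IDisj are irrelevant for classical formulas.\<close>
fun csat :: "'p valuation \<Rightarrow> 'p fml \<Rightarrow> bool" where
  "csat v (Var p) = v p"
| "csat v (NegVar p) = (\<not> v p)"
| "csat v Bot = False"
| "csat v Top = True"
| "csat v (Dep ps q) = True"
| "csat v (Conj a b) = (csat v a \<and> csat v b)"
| "csat v (Tensor a b) = (csat v a \<or> csat v b)"
| "csat v (IDisj a b) = (csat v a \<or> csat v b)"
| "csat v (Imp a b) = (csat v a \<longrightarrow> csat v b)"

definition tautology :: "'p fml \<Rightarrow> bool" where
  "tautology \<phi> \<longleftrightarrow> (\<forall>v. csat v \<phi>)"

end

theory Submission
  imports Defs
begin

text \<open>Classical formulas are flat: a team satisfies such a formula iff each of its valuations
  does under the classical reading. For a tensor, split the team according to which disjunct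
  holds; for an implication, test it on singleton subteams. Validity is then truth in every
  singleton team, which is exactly being a tautology.\<close>

lemma tsat_classical_iff:
  assumes "classical \<phi>"
  shows "tsat X \<phi> \<longleftrightarrow> (\<forall>v\<in>X. csat v \<phi>)"
  using assms
proof (induction \<phi> arbitrary: X)
  case (Tensor a b)
  then have IH: "\<And>Y. tsat Y a \<longleftrightarrow> (\<forall>v\<in>Y. csat v a)" "\<And>Y. tsat Y b \<longleftrightarrow> (\<forall>v\<in>Y. csat v b)"
    by auto
  show ?case
  proof
    assume "\<forall>v\<in>X. csat v (Tensor a b)"
    then have "X = {v\<in>X. csat v a} \<union> {v\<in>X. csat v b}" by auto
    moreover have "tsat {v\<in>X. csat v a} a" "tsat {v\<in>X. csat v b} b" using IH by auto
    ultimately show "tsat X (Tensor a b)" by auto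
  qed (use IH in auto)
next
  case (Imp a b)
  then have IH: "\<And>Y. tsat Y a \<longleftrightarrow> (\<forall>v\<in>Y. csat v a)" "\<And>Y. tsat Y b \<longleftrightarrow> (\<forall>v\<in>Y. csat v b)"
    by auto
  show ?case
  proof
    assume imp: "tsat X (Imp a b)"
    show "\<forall>v\<in>X. csat v (Imp a b)"
    proof
      fix v assume "v \<in> X"
      with imp have "tsat {v} a \<longrightarrow> tsat {v} b" by simp
      then show "csat v (Imp a b)" using IH by simp
    qed
  qed (use IH in auto)
qed auto

theorem lemma2p6:
  fixes \<phi> :: "'p fml"
  assumes "classical \<phi>"
  shows "tautology \<phi> \<longleftrightarrow> valid \<phi>"
proof
  assume "tautology \<phi>"
  then show "valid \<phi>"
    by (simp add: tautology_def valid_def tsat_classical_iff[OF assms])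
next
  assume "valid \<phi>"
  then have "tsat {v} \<phi>" for v by (simp add: valid_def)
  then show "tautology \<phi>"
    by (simp add: tautology_def tsat_classical_iff[OF assms])
qed

end
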